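(* Let $E$ be a countable directed graph, $x=x_0x_1\cdots\in E^\infty$, and $\beta\in(-\infty,0)$. If the orbit $[x]$ is $\beta$-summable, then $E^*s(x_i)$ is finite for every $i\ge0$, $s(x_i)\neq s(x_j)$ whenever $i\neq j$, and there exists $\mu\in E^*$ such that $s(\mu)$ is a source and $r(\mu)=s(x)$.
   Context: Directed graph conventions: paths $\mu=\mu_0\cdots\mu_{n-1}$ with $r(\mu_i)=s(\mu_{i+1})$, vertices as paths of length $0$, $E^*$ the finite paths, $E^*v=\{\mu\in E^*:r(\mu)=v\}$; $E^\infty$ the infinite paths $x=x_0x_1\cdots$ with $r(x_i)=s(x_{i+1})$, $s(x)=s(x_0)$. A vertex is a source if it receives no edges. The orbit (tail equivalence class) of $x\in E^\infty$ is $[x]=\{y\in E^\infty:\exists n,m\ge0,\ y_{i+m}=x_{i+n}\ \forall i\ge0\}$. $[x]$ is consistent if $x$ is not eventually periodic; then for $y\in[x]$ written $y=\mu z$, $x=\nu z$ with $\mu,\nu$ finite paths and $z\in E^\infty$, $l_x(y):=e^{-(|\mu|-|\nu|)}$ is well defined. $[x]$ is $\beta$-summable if it is consistent and $\sum_{y\in[x]}l_x(y)^\beta<\infty$. *)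

theory Defs
  imports "HOL-Analysis.Analysis"
begin

text \<open>A directed graph is given by a vertex type 'v, an edge type 'e and
  source/range maps s r :: 'e => 'v (E^0 = UNIV, E^1 = UNIV).
  A finite path is a pair (v, es): es = [] gives the vertex v (path of length 0);
  otherwise es is a list of edges with r(es!i) = s(es!(i+1)) and v = s(hd es).\<close>

definition fpath :: "('e \<Rightarrow> 'v) \<Rightarrow> ('e \<Rightarrow> 'v) \<Rightarrow> 'v \<times> 'e list \<Rightarrow> bool" where
  "fpath s r p \<longleftrightarrow> (snd p = [] \<or> s (hd (snd p)) = fst p) \<and>
     (\<forall>i. Suc i < length (snd p) \<longrightarrow> r (snd p ! i) = s (snd p ! Suc i))"

definition fsrc :: "'v \<times> 'e list \<Rightarrow> 'v" where
  "fsrc p = fst p"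

definition frng :: "('e \<Rightarrow> 'v) \<Rightarrow> 'v \<times> 'e list \<Rightarrow> 'v" where
  "frng r p = (if snd p = [] then fst p else r (last (snd p)))"

definition paths_to :: "('e \<Rightarrow> 'v) \<Rightarrow> ('e \<Rightarrow> 'v) \<Rightarrow> 'v \<Rightarrow> ('v \<times> 'e list) set" where
  "paths_to s r v = {p. fpath s r p \<and> frng r p = v}"

definition is_source :: "('e \<Rightarrow> 'v) \<Rightarrow> 'v \<Rightarrow> bool" where
  "is_source r v \<longleftrightarrow> (\<nexists>e. r e = v)"

definition ipath :: "('e \<Rightarrow> 'v) \<Rightarrow> ('e \<Rightarrow> 'v) \<Rightarrow> (nat \<Rightarrow> 'e) \<Rightarrow> bool" where
  "ipath s r x \<longleftrightarrow> (\<forall>i. r (x i) = s (x (Suc i)))"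

definition orbit :: "('e \<Rightarrow> 'v) \<Rightarrow> ('e \<Rightarrow> 'v) \<Rightarrow> (nat \<Rightarrow> 'e) \<Rightarrow> (nat \<Rightarrow> 'e) set" where
  "orbit s r x = {y. ipath s r y \<and> (\<exists>n m. \<forall>i. y (i + m) = x (i + n))}"

definition eventually_periodic :: "(nat \<Rightarrow> 'e) \<Rightarrow> bool" where
  "eventually_periodic x \<longleftrightarrow> (\<exists>n p. p > 0 \<and> (\<forall>i\<ge>n. x (i + p) = x i))"

definition consistent :: "(nat \<Rightarrow> 'e) \<Rightarrow> bool" where
  "consistent x \<longleftrightarrow> \<not> eventually_periodic x"

text \<open>l_x(y) = exp(-(|\<mu>| - |\<nu>|)) where y = \<mu> z, x = \<nu> z, i.e.
  y(i + |\<mu>|) = x(i + |\<nu>|) for all i.\<close>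
definition lx :: "(nat \<Rightarrow> 'e) \<Rightarrow> (nat \<Rightarrow> 'e) \<Rightarrow> real" where
  "lx x y = (let (m, n) = (SOME (m, n). \<forall>i. y (i + m) = x (i + n))
             in exp (- (real m - real n)))"

definition beta_summable :: "('e \<Rightarrow> 'v) \<Rightarrow> ('e \<Rightarrow> 'v) \<Rightarrow> real \<Rightarrow> (nat \<Rightarrow> 'e) \<Rightarrow> bool" where
  "beta_summable s r \<beta> x \<longleftrightarrow> consistent x \<and>
     (\<lambda>y. lx x y powr \<beta>) summable_on orbit s r x"

end

theory Submission
  imports Defs
begin

text \<open>Prepending a path \<mu> with range s(x_i) to the tail x_i x_{i+1} ... gives a point of the orbit
  [x] with l_x = exp(i - |\<mu>|); distinct \<mu> give distinct points because x is not eventually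
  periodic. As \<beta> < 0, each such point contributes at least exp(\<beta> i) to the \<beta>-sum, so
  E^* s(x_i) is finite. A repeated vertex s(x_i) = s(x_j) would make x_i ... x_{j-1} a cycle
  whose powers are infinitely many paths into s(x_i); and if no path into s(x_0) started at a
  source, every such path could be extended backwards, giving paths of every length.\<close>

lemma eventually_periodic_if_shift_eq:
  assumes "a < b" and "\<forall>j. x (j + a) = x (j + b)"
  shows "eventually_periodic x"
proof -
  have "x (i + (b - a)) = x i" if "a \<le> i" for i
    using that assms spec[OF assms(2), of "i - a"] by simp
  then show ?thesis
    unfolding eventually_periodic_def using assms(1) by (intro exI[of _ a] exI[of _ "b - a"]) auto
qed

lemma consistent_shift_difference_unique:
  assumes "consistent x" and "\<forall>j. y (j + m) = x (j + n)" and "\<forall>j. y (j + m') = x (j + n')"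
  shows "real m - real n = real m' - real n'"
proof (rule ccontr)
  assume "real m - real n \<noteq> real m' - real n'"
  then have "n + m' < n' + m \<or> n' + m < n + m'" by linarith
  moreover have "x (j + (n + m')) = x (j + (n' + m))" for j
  proof -
    have "x (j + (n + m')) = y (j + m' + m)" using spec[OF assms(2), of "j + m'"] by (simp add: ac_simps)
    also have "\<dots> = x (j + (n' + m))" using spec[OF assms(3), of "j + m"] by (simp add: ac_simps)
    finally show ?thesis .
  qed
  ultimately have "eventually_periodic x"
    using eventually_periodic_if_shift_eq[of "n + m'" "n' + m" x]
      eventually_periodic_if_shift_eq[of "n' + m" "n + m'" x] by auto
  then show False using assms(1) unfolding consistent_def by blast
qed

lemma lx_eq:
  assumes "consistent x" and "\<forall>j. y (j + m) = x (j + n)"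
  shows "lx x y = exp (- (real m - real n))"
proof -
  let ?P = "\<lambda>(m, n). \<forall>i. y (i + m) = x (i + n)"
  obtain m' n' where mn: "(SOME p. ?P p) = (m', n')" by fastforce
  have "?P (m, n)" using assms by simp
  then have "?P (m', n')" unfolding mn[symmetric] by (rule someI)
  then have "real m' - real n' = real m - real n"
    using consistent_shift_difference_unique assms by simp
  then show ?thesis unfolding lx_def mn by simp
qed

lemma finite_if_summable_on_bounded_below:
  fixes f :: "'a \<Rightarrow> real"
  assumes "f summable_on A" and "c > 0" and "\<And>a. a \<in> A \<Longrightarrow> f a \<ge> c"
  shows "finite A"
proof (rule ccontr)
  assume "infinite A"
  obtain N :: nat where N: "real N > infsum f A / c" using reals_Archimedean2 by blast
  obtain F where F: "F \<subseteq> A" "finite F" "card F = N"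
    using infinite_arbitrarily_large[OF \<open>infinite A\<close>] by blast
  have "real N * c = (\<Sum>a\<in>F. c)" using F by simp
  also have "\<dots> \<le> sum f F" using F assms(3) by (intro sum_mono) auto
  also have "\<dots> = infsum f F" using F by simp
  also have "\<dots> \<le> infsum f A"
    using F assms by (intro infsum_mono2) (auto intro: summable_on_subset_banach order.trans[OF less_imp_le])
  finally have "real N * c \<le> infsum f A" .
  then show False using N assms(2) by (simp add: field_simps)
qed

lemma fpath_eqI:
  assumes "fpath s r p" "fpath s r q" "frng r p = frng r q" "snd p = snd q"
  shows "p = q"
  using assms unfolding fpath_def frng_def by (cases "snd p = []") (auto simp: prod_eq_iff)

lemma fpath_Cons:
  assumes "fpath s r (v, es)" and "r e = v"
  shows "fpath s r (s e, e # es)" and "frng r (s e, e # es) = frng r (v, es)"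
proof -
  show "fpath s r (s e, e # es)"
    unfolding fpath_def
  proof (intro conjI allI impI)
    fix k assume k: "Suc k < length (snd (s e, e # es))"
    then show "r (snd (s e, e # es) ! k) = s (snd (s e, e # es) ! Suc k)"
      using assms unfolding fpath_def by (cases k; cases es) auto
  qed simp
  show "frng r (s e, e # es) = frng r (v, es)"
    using assms(2) unfolding frng_def by auto
qed

definition prepend_path :: "'e list \<Rightarrow> (nat \<Rightarrow> 'e) \<Rightarrow> nat \<Rightarrow> 'e" where
  "prepend_path es y j = (if j < length es then es ! j else y (j - length es))"

lemma prepend_path_tail: "prepend_path es y (j + length es) = y j"
  unfolding prepend_path_def by simp

lemma ipath_prepend_path:
  assumes "fpath s r (v, es)" and "frng r (v, es) = s (y 0)" and "ipath s r y"
  shows "ipath s r (prepend_path es y)"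
  unfolding ipath_def
proof
  fix j
  consider "Suc j < length es" | "Suc j = length es" | "length es < Suc j" by linarith
  then show "r (prepend_path es y j) = s (prepend_path es y (Suc j))"
  proof cases
    case 1 then show ?thesis using assms(1) unfolding prepend_path_def fpath_def by auto
  next
    case 2
    then have "last es = es ! j" by (metis diff_Suc_1 last_conv_nth list.size(3) nat.distinct(1))
    moreover have "es \<noteq> []" using 2 by auto
    ultimately show ?thesis using 2 assms(2) unfolding prepend_path_def frng_def by auto
  next
    case 3
    then have "Suc j - length es = Suc (j - length es)" by simp
    then show ?thesis using 3 assms(3) unfolding prepend_path_def ipath_def by simp
  qed
qed

lemma prepend_path_in_orbit:
  assumes "ipath s r x" and "p \<in> paths_to s r (s (x i))"
  shows "prepend_path (snd p) (\<lambda>j. x (j + i)) \<in> orbit s r x"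
proof -
  obtain v es where p: "p = (v, es)" by fastforce
  have "fpath s r (v, es)" "frng r (v, es) = s (x (0 + i))"
    using assms(2) unfolding p paths_to_def by auto
  moreover have "ipath s r (\<lambda>j. x (j + i))" using assms(1) unfolding ipath_def by simp
  ultimately have "ipath s r (prepend_path es (\<lambda>j. x (j + i)))"
    by (rule ipath_prepend_path)
  moreover have "\<forall>j. prepend_path es (\<lambda>j. x (j + i)) (j + length es) = x (j + i)"
    by (simp add: prepend_path_tail)
  ultimately show ?thesis unfolding p orbit_def by auto
qed

lemma lx_prepend_path:
  assumes "consistent x"
  shows "lx x (prepend_path es (\<lambda>j. x (j + i))) = exp (real i - real (length es))"
proof -
  have "\<forall>j. prepend_path es (\<lambda>j. x (j + i)) (j + length es) = x (j + i)"
    by (simp add: prepend_path_tail)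
  then show ?thesis using lx_eq[OF assms] by simp
qed

lemma inj_on_prepend_path:
  assumes "consistent x"
  shows "inj_on (\<lambda>p. prepend_path (snd p) (\<lambda>j. x (j + i))) (paths_to s r v)"
proof
  fix p q assume p: "p \<in> paths_to s r v" and q: "q \<in> paths_to s r v"
  assume eq: "prepend_path (snd p) (\<lambda>j. x (j + i)) = prepend_path (snd q) (\<lambda>j. x (j + i))"
  have "\<forall>j. prepend_path (snd p) (\<lambda>j. x (j + i)) (j + length (snd p)) = x (j + i)"
    by (simp add: prepend_path_tail)
  moreover have "\<forall>j. prepend_path (snd p) (\<lambda>j. x (j + i)) (j + length (snd q)) = x (j + i)"
    unfolding eq by (simp add: prepend_path_tail)
  ultimately have "real (length (snd p)) - real i = real (length (snd q)) - real i"
    by (rule consistent_shift_difference_unique[OF assms])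
  then have len: "length (snd p) = length (snd q)" by simp
  have "snd p = snd q"
  proof (rule nth_equalityI)
    fix j assume "j < length (snd p)"
    then show "snd p ! j = snd q ! j"
      using fun_cong[OF eq, of j] len unfolding prepend_path_def by simp
  qed (rule len)
  then show "p = q" using p q unfolding paths_to_def by (auto intro: fpath_eqI)
qed

lemma finite_paths_to_if_summable:
  fixes s r :: "'e \<Rightarrow> 'v" and x :: "nat \<Rightarrow> 'e"
  assumes "ipath s r x" and "\<beta> < 0" and "beta_summable s r \<beta> x"
  shows "finite (paths_to s r (s (x i)))"
proof -
  have cons: "consistent x" and summ: "(\<lambda>y. lx x y powr \<beta>) summable_on orbit s r x"
    using assms(3) unfolding beta_summable_def by auto
  define P where "P = paths_to s r (s (x i))"
  define g where "g p = prepend_path (snd p) (\<lambda>j. x (j + i))" for p :: "'v \<times> 'e list"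
  have "finite (g ` P)"
  proof (rule finite_if_summable_on_bounded_below)
    have "g ` P \<subseteq> orbit s r x"
      using prepend_path_in_orbit[OF assms(1)] unfolding g_def P_def by blast
    then show "(\<lambda>y. lx x y powr \<beta>) summable_on g ` P"
      by (rule summable_on_subset_banach[OF summ])
    show "exp (\<beta> * real i) > 0" by simp
    fix y assume "y \<in> g ` P"
    then obtain p where y: "y = g p" by blast
    have "lx x y powr \<beta> = exp (\<beta> * real i - \<beta> * real (length (snd p)))"
      unfolding y g_def lx_prepend_path[OF cons] by (simp add: powr_def algebra_simps)
    moreover have "\<beta> * real (length (snd p)) \<le> 0" using assms(2) by (simp add: mult_nonpos_nonneg)
    ultimately show "lx x y powr \<beta> \<ge> exp (\<beta> * real i)" by simp
  qed
  moreover have "inj_on g P"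
    using inj_on_prepend_path[OF cons] unfolding g_def P_def .
  ultimately show ?thesis unfolding P_def using finite_imageD by blast
qed

definition cycle_power :: "('e \<Rightarrow> 'v) \<Rightarrow> (nat \<Rightarrow> 'e) \<Rightarrow> nat \<Rightarrow> nat \<Rightarrow> 'v \<times> 'e list" where
  "cycle_power s c d k = (s (c 0), map (\<lambda>t. c (t mod d)) [0..<Suc k * d])"

lemma length_cycle_power: "length (snd (cycle_power s c d k)) = Suc k * d"
  unfolding cycle_power_def by simp

lemma fpath_cycle_power:
  assumes "0 < d" and "\<And>t. r (c (t mod d)) = s (c (Suc t mod d))"
  shows "fpath s r (cycle_power s c d k)"
  unfolding fpath_def
proof (intro conjI allI impI)
  show "snd (cycle_power s c d k) = [] \<or> s (hd (snd (cycle_power s c d k))) = fst (cycle_power s c d k)"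
    using assms(1) unfolding cycle_power_def by (simp add: hd_map upt_conv_Cons)
  fix t assume "Suc t < length (snd (cycle_power s c d k))"
  then show "r (snd (cycle_power s c d k) ! t) = s (snd (cycle_power s c d k) ! Suc t)"
    unfolding cycle_power_def using assms(2)[of t] by (simp del: upt_Suc)
qed

lemma frng_cycle_power:
  assumes "0 < d"
  shows "frng r (cycle_power s c d k) = r (c (d - 1))"
proof -
  have "Suc k * d - 1 = (d - 1) + k * d" using assms by (simp add: algebra_simps)
  moreover have "((d - 1) + k * d) mod d = d - 1" using assms by (simp only: mod_mult_self1) simp
  ultimately have last_mod: "(Suc k * d - 1) mod d = d - 1" by simp
  have "0 < Suc k * d" using assms by simp
  then have last_upt: "last [0..<Suc k * d] = Suc k * d - 1" and nonempty: "[0..<Suc k * d] \<noteq> []"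
    by simp_all
  have "snd (cycle_power s c d k) \<noteq> []" using nonempty unfolding cycle_power_def snd_conv by simp
  moreover have "last (snd (cycle_power s c d k)) = c (d - 1)"
    unfolding cycle_power_def snd_conv last_map[OF nonempty] last_upt last_mod ..
  ultimately show ?thesis unfolding frng_def by simp
qed

lemma infinite_paths_to_if_vertex_repeats:
  assumes "ipath s r x" and "i < j" and "s (x i) = s (x j)"
  shows "infinite (paths_to s r (s (x i)))"
proof -
  define d where "d = j - i"
  define c where "c t = x (i + t)" for t
  have d: "0 < d" "i + d = j" using assms(2) unfolding d_def by auto
  have "r (c (d - 1)) = s (x (Suc (i + (d - 1))))"
    using assms(1) unfolding c_def ipath_def by blast
  then have last_edge: "r (c (d - 1)) = s (c 0)"
    using d assms(3) unfolding c_def by (simp add: Suc_diff_1)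
  have edge: "r (c (t mod d)) = s (c (Suc t mod d))" for t
  proof (cases "Suc t mod d = 0")
    case True
    then have "t mod d = d - 1" using d by (simp add: mod_Suc split: if_splits)
    then show ?thesis using True last_edge by simp
  next
    case False
    then have "Suc t mod d = Suc (t mod d)" by (metis mod_Suc)
    then show ?thesis using assms(1) unfolding c_def ipath_def by simp
  qed
  have "range (cycle_power s c d) \<subseteq> paths_to s r (s (c 0))"
    using fpath_cycle_power[where s = s and r = r and c = c, OF d(1) edge]
      frng_cycle_power[OF d(1), where r = r and c = c] last_edge
    unfolding paths_to_def by auto
  moreover have "inj (cycle_power s c d)"
    using d(1) by (intro injI) (metis length_cycle_power mult_right_cancel nat.inject not_less0 neq0_conv)
  ultimately have "infinite (paths_to s r (s (c 0)))"
    using finite_subset range_inj_infinite by blast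
  then show ?thesis unfolding c_def by simp
qed

lemma paths_to_unbounded_if_no_source:
  assumes "\<nexists>\<mu>. fpath s r \<mu> \<and> is_source r (fsrc \<mu>) \<and> frng r \<mu> = v"
  shows "\<exists>p \<in> paths_to s r v. length (snd p) = n"
proof (induction n)
  case 0
  show ?case by (rule bexI[of _ "(v, [])"]) (auto simp: paths_to_def fpath_def frng_def)
next
  case (Suc n)
  then obtain u es where p: "(u, es) \<in> paths_to s r v" "length es = n" by auto
  then obtain e where "r e = u"
    using assms unfolding paths_to_def fsrc_def is_source_def by auto
  have "fpath s r (u, es)" "frng r (u, es) = v" using p(1) unfolding paths_to_def by auto
  then have "(s e, e # es) \<in> paths_to s r v"
    using fpath_Cons[where s = s and r = r, OF _ \<open>r e = u\<close>] unfolding paths_to_def by auto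
  then show ?case using p(2) by (intro bexI[of _ "(s e, e # es)"]) auto
qed

lemma source_reaches_if_finite_paths_to:
  assumes "finite (paths_to s r v)"
  shows "\<exists>\<mu>. fpath s r \<mu> \<and> is_source r (fsrc \<mu>) \<and> frng r \<mu> = v"
proof (rule ccontr)
  assume no_source: "\<not> ?thesis"
  have "UNIV \<subseteq> (\<lambda>p. length (snd p)) ` paths_to s r v"
  proof
    fix n :: nat
    obtain p where "p \<in> paths_to s r v" "length (snd p) = n"
      using paths_to_unbounded_if_no_source[OF no_source] by blast
    then show "n \<in> (\<lambda>p. length (snd p)) ` paths_to s r v" by (auto intro: rev_image_eqI)
  qed
  then have "finite (UNIV :: nat set)"
    using finite_subset finite_imageI[OF assms] by blast
  then show False by simp
qed

theorem lemma7p2: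
  fixes s r :: "'e \<Rightarrow> 'v" and x :: "nat \<Rightarrow> 'e" and \<beta> :: real
  assumes "countable (UNIV :: 'v set)" and "countable (UNIV :: 'e set)"
    and "ipath s r x" and "\<beta> < 0"
    and "beta_summable s r \<beta> x"
  shows "(\<forall>i. finite (paths_to s r (s (x i))))
    \<and> (\<forall>i j. i \<noteq> j \<longrightarrow> s (x i) \<noteq> s (x j))
    \<and> (\<exists>\<mu>. fpath s r \<mu> \<and> is_source r (fsrc \<mu>) \<and> frng r \<mu> = s (x 0))"
proof (intro conjI allI impI)
  have finite: "finite (paths_to s r (s (x i)))" for i
    using assms(3-5) by (rule finite_paths_to_if_summable)
  then show "finite (paths_to s r (s (x i)))" for i .
  show "s (x i) \<noteq> s (x j)" if "i \<noteq> j" for i j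
  proof
    assume eq: "s (x i) = s (x j)"
    consider "i < j" | "j < i" using \<open>i \<noteq> j\<close> by arith
    then show False
    proof cases
      case 1
      then show False using finite infinite_paths_to_if_vertex_repeats[OF assms(3) _ eq] by blast
    next
      case 2
      then show False using finite infinite_paths_to_if_vertex_repeats[OF assms(3) _ eq[symmetric]] by blast
    qed
  qed
  show "\<exists>\<mu>. fpath s r \<mu> \<and> is_source r (fsrc \<mu>) \<and> frng r \<mu> = s (x 0)"
    using finite by (rule source_reaches_if_finite_paths_to)
qed

end
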